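(* Let $X$ be a $G$-space such that the orbit map $\rho_X\colon X\to X/G$ admits a strict section, i.e. a continuous $s\colon X/G\to X$ with $\rho_X\circ s=\mathrm{id}_{X/G}$. Then (1) $\mathrm{cat}^{G,\infty}(X)=\mathrm{cat}(X/G)$, and (2) $\mathrm{TC}^{G,\infty}(X)=\mathrm{TC}(X/G)$.
   Context: All spaces are well-pointed CW complexes, $G$ a topological group acting cellularly; $x_0\in X$ is the base point. $\mathrm{cat}$ and $\mathrm{TC}$ denote the reduced Lusternik–Schnirelmann category and reduced topological complexity. $PX$ is the path space; $\mathcal{P}_k(X)=\{(\gamma_1,\dots,\gamma_k)\in(PX)^k\mid G\gamma_i(1)=G\gamma_{i+1}(0),\ 1\le i\le k-1\}$, $\pi_k(\gamma_1,\dots,\gamma_k)=(\gamma_1(0),\gamma_k(1))\in X\times X$. $\mathrm{secat}$ is reduced sectional category (least $n$ such that the base is covered by $n+1$ open sets each admitting a homotopy section). $\mathrm{TC}^{G,k}(X)=\mathrm{secat}(\pi_k)$, $\mathrm{TC}^{G,\infty}(X)=\min_k\mathrm{TC}^{G,k}(X)$. $P^k_*(X)=\{(\gamma_1,\dots,\gamma_k)\in\mathcal{P}_k(X)\mid\gamma_1(0)=x_0\}$, $q_k(\gamma_1,\dots,\gamma_k)=\gamma_k(1)$, $\mathrm{cat}^{G,k}(X)=\mathrm{secat}(q_k)$, $\mathrm{cat}^{G,\infty}(X)=\min_k\mathrm{cat}^{G,k}(X)$. *)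

theory Defs
  imports "HOL-Analysis.Analysis" "HOL-Algebra.Group" "HOL-Library.Extended_Nat"
begin

definition topological_group :: "('g, 'm) monoid_scheme \<Rightarrow> 'g topology \<Rightarrow> bool" where
  "topological_group G TG \<longleftrightarrow> group G \<and> topspace TG = carrier G
     \<and> continuous_map (prod_topology TG TG) TG (\<lambda>(g, h). g \<otimes>\<^bsub>G\<^esub> h)
     \<and> continuous_map TG TG (\<lambda>g. inv\<^bsub>G\<^esub> g)"

definition G_space :: "('g, 'm) monoid_scheme \<Rightarrow> 'g topology \<Rightarrow> ('g \<Rightarrow> 'a \<Rightarrow> 'a) \<Rightarrow> 'a topology \<Rightarrow> bool" where
  "G_space G TG act X \<longleftrightarrow> topological_group G TG
     \<and> continuous_map (prod_topology TG X) X (\<lambda>(g, x). act g x)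
     \<and> (\<forall>x\<in>topspace X. act \<one>\<^bsub>G\<^esub> x = x)
     \<and> (\<forall>g\<in>carrier G. \<forall>h\<in>carrier G. \<forall>x\<in>topspace X. act (g \<otimes>\<^bsub>G\<^esub> h) x = act g (act h x))"

definition orbit :: "('g, 'm) monoid_scheme \<Rightarrow> ('g \<Rightarrow> 'a \<Rightarrow> 'a) \<Rightarrow> 'a \<Rightarrow> 'a set" where
  "orbit G act x = {act g x | g. g \<in> carrier G}"

definition quotient_topology :: "'a topology \<Rightarrow> ('a \<Rightarrow> 'b) \<Rightarrow> 'b topology" where
  "quotient_topology X f = topology (\<lambda>U. U \<subseteq> f ` topspace X \<and> openin X {x \<in> topspace X. f x \<in> U})"

definition orbit_space :: "('g, 'm) monoid_scheme \<Rightarrow> ('g \<Rightarrow> 'a \<Rightarrow> 'a) \<Rightarrow> 'a topology \<Rightarrow> 'a set topology" where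
  "orbit_space G act X = quotient_topology X (orbit G act)"

text \<open>Paths are continuous maps on \<open>[0,1]\<close>, made extensional (value \<open>undefined\<close> outside \<open>[0,1]\<close>).\<close>
definition paths :: "'a topology \<Rightarrow> (real \<Rightarrow> 'a) set" where
  "paths X = {g. pathin X g \<and> g \<in> extensional {0..1}}"

definition path_space :: "'a topology \<Rightarrow> (real \<Rightarrow> 'a) topology" where
  "path_space X = topology_generated_by
     {{g \<in> paths X. g ` K \<subseteq> U} | K U. compact K \<and> K \<subseteq> {0..1} \<and> openin X U}"

definition secat :: "'e topology \<Rightarrow> 'b topology \<Rightarrow> ('e \<Rightarrow> 'b) \<Rightarrow> enat" where
  "secat E B p = Inf {enat n | n. \<exists>U :: nat \<Rightarrow> 'b set.
      (\<forall>i\<le>n. openin B (U i)) \<and> (\<Union>i\<le>n. U i) = topspace B \<and>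
      (\<forall>i\<le>n. \<exists>\<sigma>. continuous_map (subtopology B (U i)) E \<sigma> \<and>
                 homotopic_with (\<lambda>_. True) (subtopology B (U i)) B (p \<circ> \<sigma>) id)}"

definition based_paths_space :: "'a topology \<Rightarrow> 'a \<Rightarrow> (real \<Rightarrow> 'a) topology" where
  "based_paths_space Y y0 = subtopology (path_space Y) {g \<in> paths Y. g 0 = y0}"

definition LS_cat :: "'a topology \<Rightarrow> 'a \<Rightarrow> enat" where
  "LS_cat Y y0 = secat (based_paths_space Y y0) Y (\<lambda>g. g 1)"

definition TC :: "'a topology \<Rightarrow> enat" where
  "TC Y = secat (path_space Y) (prod_topology Y Y) (\<lambda>g. (g 0, g 1))"

text \<open>\<open>k\<close>-tuples of paths, indexed by \<open>{..<k}\<close> (paper indices \<open>1..k\<close> become \<open>0..k-1\<close>),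
  with consecutive endpoints in the same orbit.\<close>
definition multipath_space :: "('g, 'm) monoid_scheme \<Rightarrow> ('g \<Rightarrow> 'a \<Rightarrow> 'a) \<Rightarrow> 'a topology \<Rightarrow> nat
    \<Rightarrow> (nat \<Rightarrow> real \<Rightarrow> 'a) topology" where
  "multipath_space G act X k = subtopology (product_topology (\<lambda>_. path_space X) {..<k})
     {\<gamma>. \<forall>i. Suc i < k \<longrightarrow> orbit G act (\<gamma> i 1) = orbit G act (\<gamma> (Suc i) 0)}"

definition TC_G_k :: "('g, 'm) monoid_scheme \<Rightarrow> ('g \<Rightarrow> 'a \<Rightarrow> 'a) \<Rightarrow> 'a topology \<Rightarrow> nat \<Rightarrow> enat" where
  "TC_G_k G act X k = secat (multipath_space G act X k) (prod_topology X X)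
      (\<lambda>\<gamma>. (\<gamma> 0 0, \<gamma> (k - 1) 1))"

definition TC_G_inf :: "('g, 'm) monoid_scheme \<Rightarrow> ('g \<Rightarrow> 'a \<Rightarrow> 'a) \<Rightarrow> 'a topology \<Rightarrow> enat" where
  "TC_G_inf G act X = (INF k\<in>{1..}. TC_G_k G act X k)"

definition cat_G_k :: "('g, 'm) monoid_scheme \<Rightarrow> ('g \<Rightarrow> 'a \<Rightarrow> 'a) \<Rightarrow> 'a topology \<Rightarrow> 'a \<Rightarrow> nat \<Rightarrow> enat" where
  "cat_G_k G act X x0 k = secat
      (subtopology (multipath_space G act X k) {\<gamma>. \<gamma> 0 0 = x0}) X (\<lambda>\<gamma>. \<gamma> (k - 1) 1)"

definition cat_G_inf :: "('g, 'm) monoid_scheme \<Rightarrow> ('g \<Rightarrow> 'a \<Rightarrow> 'a) \<Rightarrow> 'a topology \<Rightarrow> 'a \<Rightarrow> enat" where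
  "cat_G_inf G act X x0 = (INF k\<in>{1..}. cat_G_k G act X x0 k)"

end

theory Submission
  imports Defs
begin

text \<open>Homotopies in \<open>X/G\<close> lift to \<open>X\<close> through the section \<open>s\<close>, but only up to orbits at the
  endpoints; a \<open>3\<close>-stage multipath (constant path, lifted path, constant path) absorbs exactly
  this discrepancy. So an open set of \<open>X/G\<close> carrying a motion planner (or a contraction to the
  base orbit) pulls back along the orbit map to an open set of \<open>X\<close> admitting a section of the
  fibration defining \<open>TC_G_k\<close> (or \<open>cat_G_k\<close>) for \<open>k = 3\<close>. Conversely, projecting a
  \<open>k\<close>-stage multipath to \<open>X/G\<close> glues its pieces into an honest homotopy there, and pulling
  back along \<open>s\<close> gives the reverse inequality for every \<open>k\<close>.\<close>

lemma Union_path_space_subbasis: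
  "\<Union>{{g \<in> paths X. g ` K \<subseteq> U} | K U. compact K \<and> K \<subseteq> {0..1} \<and> openin X U} = paths X"
proof -
  have "paths X \<in> {{g \<in> paths X. g ` K \<subseteq> U} | K U. compact K \<and> K \<subseteq> {0..1} \<and> openin X U}"
    by (intro CollectI exI[of _ "{}"] exI[of _ "topspace X"]) auto
  then show ?thesis
    by blast
qed

lemma topspace_path_space [simp]: "topspace (path_space X) = paths X"
  unfolding path_space_def topology_generated_by_topspace Union_path_space_subbasis ..

lemma openin_path_space_subbasic:
  assumes "compact K" "K \<subseteq> {0..1}" "openin X U"
  shows "openin (path_space X) {g \<in> paths X. g ` K \<subseteq> U}"
  unfolding path_space_def by (rule topology_generated_by_Basis) (use assms in blast)

lemma continuous_map_paths: "g \<in> paths X \<Longrightarrow> continuous_map (top_of_set {0..1}) X g"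
  by (simp add: paths_def pathin_def)

lemma neighbourhood_base_of_compactin_unit_interval:
  "neighbourhood_base_of (compactin (top_of_set {0..1::real})) (top_of_set {0..1})"
  by (simp add: locally_compact_space_neighbourhood_base [symmetric] Hausdorff_space_subtopology
      compact_imp_locally_compact_space compact_space_subtopology)

lemma continuous_map_path_eval:
  "continuous_map (prod_topology (top_of_set {0..1}) (path_space Y)) Y (\<lambda>(t, g). g t)"
  unfolding continuous_map_def
proof (intro conjI allI impI)
  show "(\<lambda>(t, g). g t) \<in> topspace (prod_topology (top_of_set {0..1}) (path_space Y)) \<rightarrow> topspace Y"
  proof
    fix p assume "p \<in> topspace (prod_topology (top_of_set {0..1::real}) (path_space Y))"
    then obtain t g where p: "p = (t, g)" and t: "t \<in> {0..1}" and "g \<in> paths Y"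
      by auto
    then have "g ` {0..1} \<subseteq> topspace Y"
      using continuous_map_image_subset_topspace [OF continuous_map_paths] by fastforce
    then show "(\<lambda>(t, g). g t) p \<in> topspace Y"
      using p t by auto
  qed
next
  fix W assume W: "openin Y W"
  let ?P = "prod_topology (top_of_set {0..1::real}) (path_space Y)"
  show "openin ?P {p \<in> topspace ?P. (case p of (t, g) \<Rightarrow> g t) \<in> W}"
  proof (subst openin_subopen, safe)
    fix t and g :: "real \<Rightarrow> _"
    assume "(t, g) \<in> topspace ?P" and gt: "g t \<in> W"
    then have t: "t \<in> {0..1}" and g: "g \<in> paths Y" by auto
    have "openin (top_of_set {0..1}) {s \<in> {0..1}. g s \<in> W}"
      using openin_continuous_map_preimage [OF continuous_map_paths [OF g] W] by simp
    moreover have "t \<in> {s \<in> {0..1}. g s \<in> W}"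
      using t gt by simp
    ultimately obtain N K where N: "openin (top_of_set {0..1}) N"
      and "compactin (top_of_set {0..1}) K" and NK: "t \<in> N" "N \<subseteq> K" "K \<subseteq> {s \<in> {0..1}. g s \<in> W}"
      using neighbourhood_base_of_compactin_unit_interval
      unfolding neighbourhood_base_of by meson
    then have K: "compact K" "K \<subseteq> {0..1}"
      by (simp_all add: compactin_subtopology)
    show "\<exists>T. openin ?P T \<and> (t, g) \<in> T \<and> T \<subseteq> {p \<in> topspace ?P. (case p of (t, g) \<Rightarrow> g t) \<in> W}"
    proof (intro exI conjI)
      show "openin ?P (N \<times> {g \<in> paths Y. g ` K \<subseteq> W})"
        using N openin_path_space_subbasic [OF K W] by (simp add: openin_prod_Times_iff)
      show "(t, g) \<in> N \<times> {g \<in> paths Y. g ` K \<subseteq> W}"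
        using NK g by auto
      show "N \<times> {g \<in> paths Y. g ` K \<subseteq> W} \<subseteq> {p \<in> topspace ?P. (case p of (t, g) \<Rightarrow> g t) \<in> W}"
        using NK K by (auto simp: image_subset_iff subset_iff)
    qed
  qed
qed

lemma openin_compact_slice_set:
  assumes W: "openin (prod_topology X Y) W" and K: "compactin X K"
  shows "openin Y {y \<in> topspace Y. K \<times> {y} \<subseteq> W}"
proof (subst openin_subopen, intro ballI)
  fix y assume "y \<in> {y \<in> topspace Y. K \<times> {y} \<subseteq> W}"
  then have y: "y \<in> topspace Y" and KW: "K \<times> {y} \<subseteq> W"
    by auto
  obtain U V where V: "openin Y V" "y \<in> V" and UVW: "K \<subseteq> U" "U \<times> V \<subseteq> W"
    using tube_lemma_left [OF W K y KW] by blast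
  have "V \<subseteq> {y \<in> topspace Y. K \<times> {y} \<subseteq> W}"
    using openin_subset [OF V(1)] UVW by blast
  then show "\<exists>T. openin Y T \<and> y \<in> T \<and> T \<subseteq> {y \<in> topspace Y. K \<times> {y} \<subseteq> W}"
    using V by blast
qed

lemma continuous_map_path_space_curry:
  assumes H: "continuous_map (prod_topology (top_of_set {0..1}) Z) Y H"
  shows "continuous_map Z (path_space Y) (\<lambda>z. restrict (\<lambda>t. H (t, z)) {0..1})"
proof -
  have paths: "restrict (\<lambda>t. H (t, z)) {0..1} \<in> paths Y" if "z \<in> topspace Z" for z
  proof -
    have "continuous_map (top_of_set {0..1}) Y (H \<circ> (\<lambda>t. (t, z)))"
      using that by (intro continuous_map_compose [OF _ H])
        (simp add: continuous_map_pairwise o_def)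
    then have "continuous_map (top_of_set {0..1}) Y (restrict (\<lambda>t. H (t, z)) {0..1})"
      by (rule continuous_map_eq) simp
    then show ?thesis
      by (simp add: paths_def pathin_def)
  qed
  show ?thesis
    unfolding path_space_def
  proof (rule continuous_on_generated_topo)
    fix S assume "S \<in> {{g \<in> paths Y. g ` K \<subseteq> U} | K U. compact K \<and> K \<subseteq> {0..1} \<and> openin Y U}"
    then obtain K U where S: "S = {g \<in> paths Y. g ` K \<subseteq> U}" and K: "compact K" "K \<subseteq> {0..1}"
      and U: "openin Y U" by blast
    let ?W = "{p \<in> topspace (prod_topology (top_of_set {0..1}) Z). H p \<in> U}"
    have "restrict (\<lambda>t. H (t, z)) {0..1} \<in> S \<longleftrightarrow> K \<times> {z} \<subseteq> ?W" if z: "z \<in> topspace Z" for z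
    proof -
      have "restrict (\<lambda>t. H (t, z)) {0..1} \<in> S \<longleftrightarrow> (\<forall>t\<in>K. H (t, z) \<in> U)"
        using paths [OF z] K(2) unfolding S image_subset_iff by auto
      also have "\<dots> \<longleftrightarrow> K \<times> {z} \<subseteq> ?W"
        using z K(2) by auto
      finally show ?thesis .
    qed
    then have "(\<lambda>z. restrict (\<lambda>t. H (t, z)) {0..1}) -` S \<inter> topspace Z
                 = {z \<in> topspace Z. K \<times> {z} \<subseteq> ?W}"
      by blast
    moreover have "openin Z {z \<in> topspace Z. K \<times> {z} \<subseteq> ?W}"
      using K by (intro openin_compact_slice_set [OF openin_continuous_map_preimage [OF H U]])
        (simp add: compactin_subtopology)
    ultimately show "openin Z ((\<lambda>z. restrict (\<lambda>t. H (t, z)) {0..1}) -` S \<inter> topspace Z)"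
      by simp
  qed (use paths in \<open>auto simp: Union_path_space_subbasis\<close>)
qed

lemma homotopic_with_path_space_ends:
  assumes \<sigma>: "continuous_map Z (path_space Y) \<sigma>"
  shows "homotopic_with (\<lambda>_. True) Z Y (\<lambda>z. \<sigma> z 0) (\<lambda>z. \<sigma> z 1)"
proof -
  let ?T = "top_of_set {0..1::real}"
  have "continuous_map (prod_topology ?T Z) (prod_topology ?T (path_space Y)) (\<lambda>(t, z). (t, \<sigma> z))"
    using \<sigma> by (simp add: continuous_map_prod_top)
  from continuous_map_compose [OF this continuous_map_path_eval]
  have "continuous_map (prod_topology ?T Z) Y (\<lambda>(t, z). \<sigma> z t)"
    by (simp add: o_def case_prod_unfold)
  then show ?thesis
    unfolding homotopic_with_def by (intro exI [of _ "\<lambda>(t, z). \<sigma> z t"]) auto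
qed

lemma homotopic_with_iff_path_space:
  "homotopic_with (\<lambda>_. True) Z Y f g \<longleftrightarrow>
     (\<exists>\<sigma>. continuous_map Z (path_space Y) \<sigma> \<and> (\<forall>z\<in>topspace Z. \<sigma> z 0 = f z \<and> \<sigma> z 1 = g z))"
proof
  assume "homotopic_with (\<lambda>_. True) Z Y f g"
  then obtain H where "continuous_map (prod_topology (top_of_set {0..1::real}) Z) Y H"
    and "\<forall>z. H (0, z) = f z" "\<forall>z. H (1, z) = g z"
    by (auto simp: homotopic_with_def)
  then show "\<exists>\<sigma>. continuous_map Z (path_space Y) \<sigma> \<and> (\<forall>z\<in>topspace Z. \<sigma> z 0 = f z \<and> \<sigma> z 1 = g z)"
    by (intro exI [of _ "\<lambda>z. restrict (\<lambda>t. H (t, z)) {0..1}"] conjI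
        continuous_map_path_space_curry) auto
next
  assume "\<exists>\<sigma>. continuous_map Z (path_space Y) \<sigma> \<and> (\<forall>z\<in>topspace Z. \<sigma> z 0 = f z \<and> \<sigma> z 1 = g z)"
  then obtain \<sigma> where "continuous_map Z (path_space Y) \<sigma>"
    and "\<forall>z\<in>topspace Z. \<sigma> z 0 = f z \<and> \<sigma> z 1 = g z"
    by blast
  then show "homotopic_with (\<lambda>_. True) Z Y f g"
    by (auto intro: homotopic_with_eq [OF homotopic_with_path_space_ends])
qed

definition const_path :: "'a \<Rightarrow> real \<Rightarrow> 'a" where
  "const_path x = restrict (\<lambda>_. x) {0..1}"

lemma continuous_map_const_path:
  assumes "continuous_map Z Y f"
  shows "continuous_map Z (path_space Y) (\<lambda>z. const_path (f z))"
  using continuous_map_path_space_curry [OF continuous_map_compose [OF continuous_map_snd assms]]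
  by (simp add: const_path_def o_def)

lemma const_path_ends [simp]: "const_path x 0 = x" "const_path x 1 = x"
  by (simp_all add: const_path_def)

lemma openin_quotient_topology:
  "openin (quotient_topology X f) U \<longleftrightarrow> U \<subseteq> f ` topspace X \<and> openin X {x \<in> topspace X. f x \<in> U}"
proof -
  have "istopology (\<lambda>U. U \<subseteq> f ` topspace X \<and> openin X {x \<in> topspace X. f x \<in> U})"
    unfolding istopology_def
  proof (rule conjI; intro allI impI)
    fix S T
    assume "S \<subseteq> f ` topspace X \<and> openin X {x \<in> topspace X. f x \<in> S}"
      and "T \<subseteq> f ` topspace X \<and> openin X {x \<in> topspace X. f x \<in> T}"
    moreover have "{x \<in> topspace X. f x \<in> S \<inter> T}
                     = {x \<in> topspace X. f x \<in> S} \<inter> {x \<in> topspace X. f x \<in> T}"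
      by blast
    ultimately show "S \<inter> T \<subseteq> f ` topspace X \<and> openin X {x \<in> topspace X. f x \<in> S \<inter> T}"
      by auto
  next
    fix \<K> assume \<K>: "\<forall>U\<in>\<K>. U \<subseteq> f ` topspace X \<and> openin X {x \<in> topspace X. f x \<in> U}"
    have "{x \<in> topspace X. f x \<in> \<Union>\<K>} = (\<Union>U\<in>\<K>. {x \<in> topspace X. f x \<in> U})"
      by blast
    moreover have "openin X (\<Union>U\<in>\<K>. {x \<in> topspace X. f x \<in> U})"
      using \<K> by blast
    ultimately show "\<Union>\<K> \<subseteq> f ` topspace X \<and> openin X {x \<in> topspace X. f x \<in> \<Union>\<K>}"
      using \<K> by auto
  qed
  then show ?thesis
    by (simp add: quotient_topology_def)
qed

lemma topspace_quotient_topology [simp]: "topspace (quotient_topology X f) = f ` topspace X"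
proof -
  have "{x \<in> topspace X. f x \<in> f ` topspace X} = topspace X"
    by blast
  then have "openin (quotient_topology X f) (f ` topspace X)"
    by (simp add: openin_quotient_topology)
  then show ?thesis
    using openin_subset
      openin_topspace [of "quotient_topology X f", unfolded openin_quotient_topology]
    by blast
qed

lemma continuous_map_quotient_topology: "continuous_map X (quotient_topology X f) f"
  by (simp add: continuous_map_def openin_quotient_topology funcset_image)

lemma topspace_orbit_space: "topspace (orbit_space G act X) = orbit G act ` topspace X"
  by (simp add: orbit_space_def)

lemma continuous_map_orbit: "continuous_map X (orbit_space G act X) (orbit G act)"
  unfolding orbit_space_def by (rule continuous_map_quotient_topology)

lemma continuous_map_preimage_subtopology:
  "continuous_map X Y f
    \<Longrightarrow> continuous_map (subtopology X {x \<in> topspace X. f x \<in> U}) (subtopology Y U) f"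
  by (simp add: continuous_map_in_subtopology continuous_map_from_subtopology image_subset_iff)

lemma continuous_map_map_prod:
  "continuous_map X X' f \<Longrightarrow> continuous_map Y Y' g
    \<Longrightarrow> continuous_map (prod_topology X Y) (prod_topology X' Y') (map_prod f g)"
  by (simp add: map_prod_def continuous_map_prod_top)

definition has_homotopy_section :: "'e topology \<Rightarrow> 'b topology \<Rightarrow> ('e \<Rightarrow> 'b) \<Rightarrow> 'b set \<Rightarrow> bool" where
  "has_homotopy_section E B p U \<longleftrightarrow> (\<exists>\<sigma>. continuous_map (subtopology B U) E \<sigma> \<and>
      homotopic_with (\<lambda>_. True) (subtopology B U) B (p \<circ> \<sigma>) id)"

lemma secat_has_homotopy_section:
  "secat E B p = Inf {enat n | n. \<exists>U :: nat \<Rightarrow> 'b set. (\<forall>i\<le>n. openin B (U i)) \<and>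
      (\<Union>i\<le>n. U i) = topspace B \<and> (\<forall>i\<le>n. has_homotopy_section E B p (U i))}"
  by (simp add: secat_def has_homotopy_section_def)

lemma secat_le_pullback:
  assumes f: "continuous_map B B' f"
    and pullback: "\<And>U. has_homotopy_section E' B' p' U
                     \<Longrightarrow> has_homotopy_section E B p {x \<in> topspace B. f x \<in> U}"
  shows "secat E B p \<le> secat E' B' p'"
  unfolding secat_has_homotopy_section
proof (rule Inf_greatest, clarify)
  fix n and U :: "nat \<Rightarrow> _"
  assume U: "\<forall>i\<le>n. openin B' (U i)" "(\<Union>i\<le>n. U i) = topspace B'"
    "\<forall>i\<le>n. has_homotopy_section E' B' p' (U i)"
  let ?V = "\<lambda>i. {x \<in> topspace B. f x \<in> U i}"
  have "(\<Union>i\<le>n. ?V i) = topspace B"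
    using U(2) continuous_map_image_subset_topspace [OF f] by blast
  moreover have "\<forall>i\<le>n. openin B (?V i)"
    using U(1) openin_continuous_map_preimage [OF f] by blast
  moreover have "\<forall>i\<le>n. has_homotopy_section E B p (?V i)"
    using U(3) pullback by blast
  ultimately show "Inf {enat n | n. \<exists>U :: nat \<Rightarrow> _. (\<forall>i\<le>n. openin B (U i)) \<and>
      (\<Union>i\<le>n. U i) = topspace B \<and> (\<forall>i\<le>n. has_homotopy_section E B p (U i))} \<le> enat n"
    by (intro Inf_lower CollectI exI [of _ n] conjI refl exI [of _ ?V]) simp_all
qed

lemma has_homotopy_section_based_paths_iff:
  "has_homotopy_section (based_paths_space Y y0) Y (\<lambda>g. g 1) U \<longleftrightarrow>
     homotopic_with (\<lambda>_. True) (subtopology Y U) Y (\<lambda>_. y0) id"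
proof
  assume "has_homotopy_section (based_paths_space Y y0) Y (\<lambda>g. g 1) U"
  then obtain \<sigma> where \<sigma>: "continuous_map (subtopology Y U) (based_paths_space Y y0) \<sigma>"
    and end_id: "homotopic_with (\<lambda>_. True) (subtopology Y U) Y (\<lambda>z. \<sigma> z 1) id"
    by (auto simp: has_homotopy_section_def o_def)
  have "continuous_map (subtopology Y U) (path_space Y) \<sigma>"
    and "\<forall>z\<in>topspace (subtopology Y U). \<sigma> z 0 = y0"
    using \<sigma> by (auto simp: based_paths_space_def continuous_map_in_subtopology)
  then have "homotopic_with (\<lambda>_. True) (subtopology Y U) Y (\<lambda>_. y0) (\<lambda>z. \<sigma> z 1)"
    by (auto intro: homotopic_with_eq [OF homotopic_with_path_space_ends])
  then show "homotopic_with (\<lambda>_. True) (subtopology Y U) Y (\<lambda>_. y0) id"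
    using end_id by (rule homotopic_with_trans)
next
  assume "homotopic_with (\<lambda>_. True) (subtopology Y U) Y (\<lambda>_. y0) id"
  then obtain \<sigma> where \<sigma>: "continuous_map (subtopology Y U) (path_space Y) \<sigma>"
    and ends: "\<forall>z\<in>topspace (subtopology Y U). \<sigma> z 0 = y0 \<and> \<sigma> z 1 = z"
    unfolding homotopic_with_iff_path_space by auto
  have "continuous_map (subtopology Y U) (based_paths_space Y y0) \<sigma>"
    using \<sigma> ends continuous_map_image_subset_topspace [OF \<sigma>]
    by (auto simp: based_paths_space_def continuous_map_in_subtopology)
  moreover have "homotopic_with (\<lambda>_. True) (subtopology Y U) Y ((\<lambda>g. g 1) \<circ> \<sigma>) id"
    using ends by (intro homotopic_with_symD [OF homotopic_with_equal])
      (auto simp: continuous_map_id_subt)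
  ultimately show "has_homotopy_section (based_paths_space Y y0) Y (\<lambda>g. g 1) U"
    unfolding has_homotopy_section_def by blast
qed

lemma has_homotopy_section_path_space_iff:
  "has_homotopy_section (path_space Y) (prod_topology Y Y) (\<lambda>g. (g 0, g 1)) U \<longleftrightarrow>
     homotopic_with (\<lambda>_. True) (subtopology (prod_topology Y Y) U) Y fst snd"
proof
  assume "has_homotopy_section (path_space Y) (prod_topology Y Y) (\<lambda>g. (g 0, g 1)) U"
  then obtain \<sigma> where \<sigma>: "continuous_map (subtopology (prod_topology Y Y) U) (path_space Y) \<sigma>"
    and ends_id: "homotopic_with (\<lambda>_. True) (subtopology (prod_topology Y Y) U) (prod_topology Y Y)
                    (\<lambda>z. (\<sigma> z 0, \<sigma> z 1)) id"
    by (auto simp: has_homotopy_section_def o_def)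
  have "homotopic_with (\<lambda>_. True) (subtopology (prod_topology Y Y) U) Y fst (\<lambda>z. \<sigma> z 0)"
    using homotopic_with_compose_continuous_map_left [OF ends_id continuous_map_fst]
    by (simp add: o_def homotopic_with_sym)
  moreover have "homotopic_with (\<lambda>_. True) (subtopology (prod_topology Y Y) U) Y (\<lambda>z. \<sigma> z 1) snd"
    using homotopic_with_compose_continuous_map_left [OF ends_id continuous_map_snd]
    by (simp add: o_def)
  ultimately show "homotopic_with (\<lambda>_. True) (subtopology (prod_topology Y Y) U) Y fst snd"
    using homotopic_with_path_space_ends [OF \<sigma>] by (meson homotopic_with_trans)
next
  assume "homotopic_with (\<lambda>_. True) (subtopology (prod_topology Y Y) U) Y fst snd"
  then obtain \<sigma> where "continuous_map (subtopology (prod_topology Y Y) U) (path_space Y) \<sigma>"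
    and "\<forall>z\<in>topspace (subtopology (prod_topology Y Y) U). \<sigma> z 0 = fst z \<and> \<sigma> z 1 = snd z"
    unfolding homotopic_with_iff_path_space by auto
  then show "has_homotopy_section (path_space Y) (prod_topology Y Y) (\<lambda>g. (g 0, g 1)) U"
    unfolding has_homotopy_section_def
    by (intro exI conjI homotopic_with_symD [OF homotopic_with_equal])
      (auto simp: continuous_map_id_subt)
qed

lemma continuous_map_multipath_space:
  "continuous_map Z (multipath_space G act X k) \<phi> \<longleftrightarrow>
     \<phi> ` topspace Z \<subseteq> extensional {..<k} \<and> (\<forall>i<k. continuous_map Z (path_space X) (\<lambda>z. \<phi> z i)) \<and>
     (\<forall>z\<in>topspace Z. \<forall>i. Suc i < k \<longrightarrow> orbit G act (\<phi> z i 1) = orbit G act (\<phi> z (Suc i) 0))"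
  unfolding multipath_space_def continuous_map_in_subtopology continuous_map_componentwise
  by (simp add: Pi_iff Ball_def)

lemma homotopic_orbit_multipath_ends:
  assumes \<phi>: "continuous_map Z (multipath_space G act X k) \<phi>" and "j < k"
  shows "homotopic_with (\<lambda>_. True) Z (orbit_space G act X)
           (\<lambda>z. orbit G act (\<phi> z 0 0)) (\<lambda>z. orbit G act (\<phi> z j 1))"
proof -
  have paths: "\<forall>i<k. continuous_map Z (path_space X) (\<lambda>z. \<phi> z i)"
    and glued: "\<forall>z\<in>topspace Z. \<forall>i. Suc i < k \<longrightarrow>
                  orbit G act (\<phi> z i 1) = orbit G act (\<phi> z (Suc i) 0)"
    using \<phi> unfolding continuous_map_multipath_space by auto
  have step: "homotopic_with (\<lambda>_. True) Z (orbit_space G act X)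
                (\<lambda>z. orbit G act (\<phi> z i 0)) (\<lambda>z. orbit G act (\<phi> z i 1))" if "i < k" for i
    using homotopic_with_compose_continuous_map_left
      [OF homotopic_with_path_space_ends [OF paths [rule_format, OF that]]
        continuous_map_orbit [of X G act]]
    by (simp add: o_def)
  show ?thesis
    using \<open>j < k\<close>
  proof (induction j)
    case 0
    then show ?case by (rule step)
  next
    case (Suc j)
    then have "homotopic_with (\<lambda>_. True) Z (orbit_space G act X)
                 (\<lambda>z. orbit G act (\<phi> z 0 0)) (\<lambda>z. orbit G act (\<phi> z (Suc j) 0))"
      using glued by (auto intro: homotopic_with_eq [OF Suc.IH])
    then show ?case
      using step [OF Suc.prems] by (rule homotopic_with_trans)
  qed
qed

lemma homotopy_section_cat_G_imp_homotopic:
  assumes "1 \<le> k"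
    and "has_homotopy_section (subtopology (multipath_space G act X k) {\<gamma>. \<gamma> 0 0 = x0}) X
           (\<lambda>\<gamma>. \<gamma> (k - 1) 1) V"
  shows "homotopic_with (\<lambda>_. True) (subtopology X V) (orbit_space G act X)
           (\<lambda>_. orbit G act x0) (orbit G act)"
proof -
  obtain \<sigma> where \<sigma>: "continuous_map (subtopology X V)
                          (subtopology (multipath_space G act X k) {\<gamma>. \<gamma> 0 0 = x0}) \<sigma>"
    and end_id: "homotopic_with (\<lambda>_. True) (subtopology X V) X (\<lambda>z. \<sigma> z (k - 1) 1) id"
    using assms(2) by (auto simp: has_homotopy_section_def o_def)
  have "homotopic_with (\<lambda>_. True) (subtopology X V) (orbit_space G act X)
          (\<lambda>_. orbit G act x0) (\<lambda>z. orbit G act (\<sigma> z (k - 1) 1))"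
  proof (rule homotopic_with_eq [OF homotopic_orbit_multipath_ends])
    show "continuous_map (subtopology X V) (multipath_space G act X k) \<sigma>"
      using \<sigma> by (rule continuous_map_into_fulltopology)
    show "orbit G act x0 = orbit G act (\<sigma> z 0 0)" if "z \<in> topspace (subtopology X V)" for z
      using continuous_map_image_subset_topspace [OF \<sigma>] that by auto
  qed (use assms(1) in auto)
  moreover have "homotopic_with (\<lambda>_. True) (subtopology X V) (orbit_space G act X)
                   (\<lambda>z. orbit G act (\<sigma> z (k - 1) 1)) (orbit G act)"
    using homotopic_with_compose_continuous_map_left [OF end_id continuous_map_orbit [of X G act]]
    by (simp add: o_def)
  ultimately show ?thesis
    by (rule homotopic_with_trans)
qed

lemma homotopy_section_TC_G_imp_homotopic:
  assumes "1 \<le> k"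
    and "has_homotopy_section (multipath_space G act X k) (prod_topology X X)
           (\<lambda>\<gamma>. (\<gamma> 0 0, \<gamma> (k - 1) 1)) V"
  shows "homotopic_with (\<lambda>_. True) (subtopology (prod_topology X X) V) (orbit_space G act X)
           (orbit G act \<circ> fst) (orbit G act \<circ> snd)"
proof -
  let ?Z = "subtopology (prod_topology X X) V" and ?Q = "orbit_space G act X"
  obtain \<sigma> where \<sigma>: "continuous_map ?Z (multipath_space G act X k) \<sigma>"
    and ends_id: "homotopic_with (\<lambda>_. True) ?Z (prod_topology X X) (\<lambda>z. (\<sigma> z 0 0, \<sigma> z (k - 1) 1)) id"
    using assms(2) by (auto simp: has_homotopy_section_def o_def)
  have "homotopic_with (\<lambda>_. True) ?Z ?Q (orbit G act \<circ> fst) (\<lambda>z. orbit G act (\<sigma> z 0 0))"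
    using homotopic_with_compose_continuous_map_left
      [OF ends_id continuous_map_compose [OF continuous_map_fst continuous_map_orbit [of X G act]]]
    by (simp add: o_def homotopic_with_sym)
  moreover have "homotopic_with (\<lambda>_. True) ?Z ?Q
                   (\<lambda>z. orbit G act (\<sigma> z 0 0)) (\<lambda>z. orbit G act (\<sigma> z (k - 1) 1))"
    using homotopic_orbit_multipath_ends [OF \<sigma>] assms(1) by simp
  moreover have "homotopic_with (\<lambda>_. True) ?Z ?Q (\<lambda>z. orbit G act (\<sigma> z (k - 1) 1)) (orbit G act \<circ> snd)"
    using homotopic_with_compose_continuous_map_left
      [OF ends_id continuous_map_compose [OF continuous_map_snd continuous_map_orbit [of X G act]]]
    by (simp add: o_def)
  ultimately show ?thesis
    by (meson homotopic_with_trans)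
qed

locale orbit_map_section =
  fixes G :: "('g, 'm) monoid_scheme" and act :: "'g \<Rightarrow> 'a \<Rightarrow> 'a" and X :: "'a topology"
    and s :: "'a set \<Rightarrow> 'a"
  assumes continuous_section: "continuous_map (orbit_space G act X) X s"
    and orbit_section: "\<And>y. y \<in> topspace (orbit_space G act X) \<Longrightarrow> orbit G act (s y) = y"
begin

lemma multipath_lift_homotopy:
  assumes a: "continuous_map Z X a" and b: "continuous_map Z X b"
    and hom: "homotopic_with (\<lambda>_. True) Z (orbit_space G act X) (orbit G act \<circ> a) (orbit G act \<circ> b)"
  obtains \<tau> where "continuous_map Z (multipath_space G act X 3) \<tau>"
    and "\<And>z. z \<in> topspace Z \<Longrightarrow> \<tau> z 0 0 = a z" and "\<And>z. z \<in> topspace Z \<Longrightarrow> \<tau> z 2 1 = b z"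
proof -
  obtain H where H: "continuous_map (prod_topology (top_of_set {0..1::real}) Z) (orbit_space G act X) H"
    and H0: "\<And>z. H (0, z) = orbit G act (a z)" and H1: "\<And>z. H (1, z) = orbit G act (b z)"
    using hom by (auto simp: homotopic_with_def)
  define lift where "lift z = restrict (\<lambda>t. s (H (t, z))) {0..1}" for z
  define \<tau> where "\<tau> z = restrict (\<lambda>i. [const_path (a z), lift z, const_path (b z)] ! i) {..<3}" for z
  have "continuous_map Z (path_space X) lift"
    unfolding lift_def
    using continuous_map_path_space_curry [OF continuous_map_compose [OF H continuous_section]]
    by (simp add: o_def)
  then have "\<forall>i<3. continuous_map Z (path_space X) (\<lambda>z. \<tau> z i)"
    using continuous_map_const_path [OF a] continuous_map_const_path [OF b]
    by (auto simp: \<tau>_def less_Suc_eq numeral_3_eq_3)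
  moreover have "orbit G act (\<tau> z i 1) = orbit G act (\<tau> z (Suc i) 0)"
    if "z \<in> topspace Z" "Suc i < 3" for z i
  proof -
    have "orbit G act (s (orbit G act x)) = orbit G act x" if "x \<in> topspace X" for x
      using orbit_section that by (simp add: topspace_orbit_space)
    moreover have "a z \<in> topspace X" "b z \<in> topspace X"
      using continuous_map_image_subset_topspace [OF a] continuous_map_image_subset_topspace [OF b]
        that
      by auto
    moreover have "i = 0 \<or> i = 1"
      using that by auto
    ultimately show ?thesis
      by (auto simp: \<tau>_def lift_def H0 H1)
  qed
  ultimately have "continuous_map Z (multipath_space G act X 3) \<tau>"
    unfolding continuous_map_multipath_space by (auto simp: \<tau>_def)
  then show ?thesis
    by (rule that) (simp_all add: \<tau>_def)
qed

lemma homotopic_imp_homotopy_section_cat_G: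
  assumes x0: "x0 \<in> topspace X"
    and hom: "homotopic_with (\<lambda>_. True) (subtopology X V) (orbit_space G act X)
                (\<lambda>_. orbit G act x0) (orbit G act)"
  shows "has_homotopy_section (subtopology (multipath_space G act X 3) {\<gamma>. \<gamma> 0 0 = x0}) X
           (\<lambda>\<gamma>. \<gamma> (3 - 1) 1) V"
proof -
  have "continuous_map (subtopology X V) X (\<lambda>_. x0)"
    using x0 by simp
  moreover have "homotopic_with (\<lambda>_. True) (subtopology X V) (orbit_space G act X)
                   (orbit G act \<circ> (\<lambda>_. x0)) (orbit G act \<circ> id)"
    using hom by (simp add: o_def)
  ultimately obtain \<tau> where \<tau>: "continuous_map (subtopology X V) (multipath_space G act X 3) \<tau>"
    and ends: "\<And>z. z \<in> topspace (subtopology X V) \<Longrightarrow> \<tau> z 0 0 = x0"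
              "\<And>z. z \<in> topspace (subtopology X V) \<Longrightarrow> \<tau> z 2 1 = id z"
    by (rule multipath_lift_homotopy [OF _ continuous_map_id_subt]) blast
  have "continuous_map (subtopology X V) (subtopology (multipath_space G act X 3) {\<gamma>. \<gamma> 0 0 = x0}) \<tau>"
    using \<tau> ends(1) by (auto simp: continuous_map_in_subtopology)
  moreover have "homotopic_with (\<lambda>_. True) (subtopology X V) X ((\<lambda>\<gamma>. \<gamma> (3 - 1) 1) \<circ> \<tau>) id"
    using ends(2) by (intro homotopic_with_symD [OF homotopic_with_equal])
      (auto simp: continuous_map_id_subt)
  ultimately show ?thesis
    unfolding has_homotopy_section_def by blast
qed

lemma homotopic_imp_homotopy_section_TC_G:
  assumes "homotopic_with (\<lambda>_. True) (subtopology (prod_topology X X) V) (orbit_space G act X)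
             (orbit G act \<circ> fst) (orbit G act \<circ> snd)"
  shows "has_homotopy_section (multipath_space G act X 3) (prod_topology X X)
           (\<lambda>\<gamma>. (\<gamma> 0 0, \<gamma> (3 - 1) 1)) V"
proof -
  let ?Z = "subtopology (prod_topology X X) V"
  obtain \<tau> where \<tau>: "continuous_map ?Z (multipath_space G act X 3) \<tau>"
    and ends: "\<And>z. z \<in> topspace ?Z \<Longrightarrow> \<tau> z 0 0 = fst z" "\<And>z. z \<in> topspace ?Z \<Longrightarrow> \<tau> z 2 1 = snd z"
    by (rule multipath_lift_homotopy [OF continuous_map_from_subtopology [OF continuous_map_fst]
          continuous_map_from_subtopology [OF continuous_map_snd] assms]) blast
  have "homotopic_with (\<lambda>_. True) ?Z (prod_topology X X) ((\<lambda>\<gamma>. (\<gamma> 0 0, \<gamma> (3 - 1) 1)) \<circ> \<tau>) id"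
    using ends by (intro homotopic_with_symD [OF homotopic_with_equal])
      (auto simp: continuous_map_id_subt)
  with \<tau> show ?thesis
    unfolding has_homotopy_section_def by blast
qed

lemma cat_G_k_3_le_LS_cat:
  assumes "x0 \<in> topspace X"
  shows "cat_G_k G act X x0 3 \<le> LS_cat (orbit_space G act X) (orbit G act x0)"
  unfolding cat_G_k_def LS_cat_def
proof (rule secat_le_pullback [OF continuous_map_orbit])
  let ?Q = "orbit_space G act X"
  fix U
  assume "has_homotopy_section (based_paths_space ?Q (orbit G act x0)) ?Q (\<lambda>g. g 1) U"
  then have contractible: "homotopic_with (\<lambda>_. True) (subtopology ?Q U) ?Q (\<lambda>_. orbit G act x0) id"
    by (simp add: has_homotopy_section_based_paths_iff)
  have "homotopic_with (\<lambda>_. True) (subtopology X {x \<in> topspace X. orbit G act x \<in> U}) ?Q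
          (\<lambda>_. orbit G act x0) (orbit G act)"
    using homotopic_with_compose_continuous_map_right
      [OF contractible continuous_map_preimage_subtopology [OF continuous_map_orbit]]
    by (simp add: o_def)
  then show "has_homotopy_section (subtopology (multipath_space G act X 3) {\<gamma>. \<gamma> 0 0 = x0}) X
               (\<lambda>\<gamma>. \<gamma> (3 - 1) 1) {x \<in> topspace X. orbit G act x \<in> U}"
    by (rule homotopic_imp_homotopy_section_cat_G [OF assms])
qed

lemma LS_cat_le_cat_G_k:
  assumes "1 \<le> k"
  shows "LS_cat (orbit_space G act X) (orbit G act x0) \<le> cat_G_k G act X x0 k"
  unfolding cat_G_k_def LS_cat_def
proof (rule secat_le_pullback [OF continuous_section])
  let ?Q = "orbit_space G act X"
  fix V
  assume "has_homotopy_section (subtopology (multipath_space G act X k) {\<gamma>. \<gamma> 0 0 = x0}) X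
            (\<lambda>\<gamma>. \<gamma> (k - 1) 1) V"
  then have hom: "homotopic_with (\<lambda>_. True) (subtopology X V) ?Q (\<lambda>_. orbit G act x0) (orbit G act)"
    by (rule homotopy_section_cat_G_imp_homotopic [OF assms])
  have "homotopic_with (\<lambda>_. True) (subtopology ?Q {y \<in> topspace ?Q. s y \<in> V}) ?Q
          (\<lambda>_. orbit G act x0) (orbit G act \<circ> s)"
    using homotopic_with_compose_continuous_map_right
      [OF hom continuous_map_preimage_subtopology [OF continuous_section]]
    by (simp add: o_def)
  then have "homotopic_with (\<lambda>_. True) (subtopology ?Q {y \<in> topspace ?Q. s y \<in> V}) ?Q
               (\<lambda>_. orbit G act x0) id"
    by (rule homotopic_with_eq) (auto simp: orbit_section)
  then show "has_homotopy_section (based_paths_space ?Q (orbit G act x0)) ?Q (\<lambda>g. g 1)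
               {y \<in> topspace ?Q. s y \<in> V}"
    by (simp add: has_homotopy_section_based_paths_iff)
qed

lemma TC_G_k_3_le_TC: "TC_G_k G act X 3 \<le> TC (orbit_space G act X)"
  unfolding TC_G_k_def TC_def
proof (rule secat_le_pullback [OF continuous_map_map_prod [OF continuous_map_orbit continuous_map_orbit]])
  let ?Q = "orbit_space G act X" and ?\<rho>\<rho> = "map_prod (orbit G act) (orbit G act)"
  fix U
  assume "has_homotopy_section (path_space ?Q) (prod_topology ?Q ?Q) (\<lambda>g. (g 0, g 1)) U"
  then have hom: "homotopic_with (\<lambda>_. True) (subtopology (prod_topology ?Q ?Q) U) ?Q fst snd"
    by (simp add: has_homotopy_section_path_space_iff)
  have "homotopic_with (\<lambda>_. True)
          (subtopology (prod_topology X X) {z \<in> topspace (prod_topology X X). ?\<rho>\<rho> z \<in> U}) ?Q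
          (orbit G act \<circ> fst) (orbit G act \<circ> snd)"
    using homotopic_with_compose_continuous_map_right [OF hom continuous_map_preimage_subtopology
        [OF continuous_map_map_prod [OF continuous_map_orbit continuous_map_orbit]]]
    by simp
  then show "has_homotopy_section (multipath_space G act X 3) (prod_topology X X)
               (\<lambda>\<gamma>. (\<gamma> 0 0, \<gamma> (3 - 1) 1)) {z \<in> topspace (prod_topology X X). ?\<rho>\<rho> z \<in> U}"
    by (rule homotopic_imp_homotopy_section_TC_G)
qed

lemma TC_le_TC_G_k:
  assumes "1 \<le> k"
  shows "TC (orbit_space G act X) \<le> TC_G_k G act X k"
  unfolding TC_G_k_def TC_def
proof (rule secat_le_pullback [OF continuous_map_map_prod [OF continuous_section continuous_section]])
  let ?Q = "orbit_space G act X"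
  fix V
  let ?Z = "subtopology (prod_topology ?Q ?Q) {u \<in> topspace (prod_topology ?Q ?Q). map_prod s s u \<in> V}"
  assume "has_homotopy_section (multipath_space G act X k) (prod_topology X X)
            (\<lambda>\<gamma>. (\<gamma> 0 0, \<gamma> (k - 1) 1)) V"
  then have hom: "homotopic_with (\<lambda>_. True) (subtopology (prod_topology X X) V) ?Q
                    (orbit G act \<circ> fst) (orbit G act \<circ> snd)"
    by (rule homotopy_section_TC_G_imp_homotopic [OF assms])
  have "homotopic_with (\<lambda>_. True) ?Z ?Q (orbit G act \<circ> s \<circ> fst) (orbit G act \<circ> s \<circ> snd)"
    using homotopic_with_compose_continuous_map_right [OF hom continuous_map_preimage_subtopology
        [OF continuous_map_map_prod [OF continuous_section continuous_section]]]
    by (simp add: comp_assoc)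
  then have "homotopic_with (\<lambda>_. True) ?Z ?Q fst snd"
    by (rule homotopic_with_eq) (auto simp: orbit_section)
  then show "has_homotopy_section (path_space ?Q) (prod_topology ?Q ?Q) (\<lambda>g. (g 0, g 1))
               {u \<in> topspace (prod_topology ?Q ?Q). map_prod s s u \<in> V}"
    by (simp add: has_homotopy_section_path_space_iff)
qed

end

theorem mainTheorem8:
  fixes G :: "('g, 'm) monoid_scheme" and TG :: "'g topology"
    and act :: "'g \<Rightarrow> 'a \<Rightarrow> 'a" and X :: "'a topology" and x0 :: 'a
    and s :: "'a set \<Rightarrow> 'a"
  assumes "G_space G TG act X"
    and "x0 \<in> topspace X"
    and "continuous_map (orbit_space G act X) X s"
    and "\<forall>y\<in>topspace (orbit_space G act X). orbit G act (s y) = y"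
  shows "cat_G_inf G act X x0 = LS_cat (orbit_space G act X) (orbit G act x0)
     \<and> TC_G_inf G act X = TC (orbit_space G act X)"
proof -
  interpret orbit_map_section G act X s
    using assms(3,4) by unfold_locales auto
  have "cat_G_inf G act X x0 = LS_cat (orbit_space G act X) (orbit G act x0)"
    unfolding cat_G_inf_def
    using cat_G_k_3_le_LS_cat [OF assms(2)] LS_cat_le_cat_G_k
    by (intro antisym INF_greatest INF_lower2 [of 3]) auto
  moreover have "TC_G_inf G act X = TC (orbit_space G act X)"
    unfolding TC_G_inf_def
    using TC_G_k_3_le_TC TC_le_TC_G_k
    by (intro antisym INF_greatest INF_lower2 [of 3]) auto
  ultimately show ?thesis ..
qed

end
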